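(* Let $X,Y,\tilde X,\tilde Y$ be cellular spaces with $X,\tilde X$ compact, let $r\ge0$, and let $g\colon Y^X\to\tilde Y^{\tilde X}$ be a primitive transform. If $a,b\colon X\to Y$ are maps with $a\overset{r}{\approx}b$, then $g(a)\overset{r}{\approx}g(b)$.
   Context: Cellular space = based CW complex; maps based unless called unbased. $Y^X$ = space of based maps $X\to Y$ (compact-open), based at the constant map. A transform is an unbased (continuous) map $g\colon Y^X\to\tilde Y^{\tilde X}$; it is primitive if for each $p\in\tilde X$ there are a point $k(p)\in X$ and an unbased map $h^p\colon Y\to\tilde Y$ such that $g(d)(p)=h^p(d(k(p)))$ for all $d\in Y^X$. Strong similarity: $\langle W\rangle$ = free abelian group on a set $W$. $Y^X_a$ = path component of $a$; $V\mapsto V|_R$ restriction; $\mathcal F_n(X)$ = finite $R\subseteq X$ containing the basepoint with $|R|\le n+1$; $\langle Y^X\rangle^{(s)}=\{V:V|_R=0\ \forall R\in\mathcal F_{s-1}(X)\}$. For unbased $U,V$: $V^{(U)}$ = unbased maps; $\Xi^U(v)$ = constant map at $v$; for $U=\coprod_iU_i$, $\boxed{\sqcup}_i\langle w_i\rangle=\langle w\rangle$, $w|_{U_i}=w_i$, multilinear. For nonempty finite $E$: simplex $\Delta E$, faces $\Delta F$; layouts = sets $A$ of pairwise disjoint nonempty subsets; $\Delta[A]=\coprod_{F\in A}\Delta F$; $S\in\langle V^{(\Delta E)}\rangle$ fissile if $S|_{\Delta[A]}=\boxed{\sqcup}_{F\in A}S|_{\Delta F}$ for all layouts. $U\wr X=(U\times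 X)/(U\times\{x_0\})$, $\#^X(w)(u\wr x)=w(u)(x)$, $\langle (Y^X)^{(U)}\rangle^{(s)}_X=\langle\#^X\rangle^{-1}\langle Y^{U\wr X}\rangle^{(s)}$. $a\overset{r}{\approx}b$ iff for each nonempty finite $E$ there is a fissile $S\in\langle (Y^X_a)^{(\Delta E)}\rangle$ with $\langle\Xi^{\Delta E}(b)\rangle-S\in\langle (Y^X)^{(\Delta E)}\rangle^{(r+1)}_X$. *)

theory Defs
  imports "HOL-Analysis.Analysis"
begin

definition disk_pts :: "nat \<Rightarrow> (nat \<Rightarrow> real) set" where
  "disk_pts n = {x \<in> PiE {..<n} (\<lambda>_. UNIV). (\<Sum>i<n. (x i)\<^sup>2) \<le> 1}"

definition open_disk_pts :: "nat \<Rightarrow> (nat \<Rightarrow> real) set" where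
  "open_disk_pts n = {x \<in> PiE {..<n} (\<lambda>_. UNIV). (\<Sum>i<n. (x i)\<^sup>2) < 1}"

definition sphere_pts :: "nat \<Rightarrow> (nat \<Rightarrow> real) set" where
  "sphere_pts n = {x \<in> PiE {..<n} (\<lambda>_. UNIV). (\<Sum>i<n. (x i)\<^sup>2) = 1}"

definition disk_top :: "nat \<Rightarrow> (nat \<Rightarrow> real) topology" where
  "disk_top n = subtopology (product_topology (\<lambda>_. euclideanreal) {..<n}) (disk_pts n)"

text \<open>A based CW complex: a Hausdorff space with a partition into cells, each cell of
  dimension n having a characteristic map from the closed n-disk which maps the open disk
  homeomorphically onto the cell and the boundary sphere into finitely many cells of lower
  dimension (closure finiteness), the topology being the weak topology with respect to the
  closed cells; the basepoint is a 0-cell.\<close>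

definition cellular_space :: "'a topology \<Rightarrow> 'a \<Rightarrow> bool" where
  "cellular_space X x0 \<longleftrightarrow> Hausdorff_space X \<and> x0 \<in> topspace X \<and>
    (\<exists>C dim. pairwise disjnt C \<and> \<Union>C = topspace X \<and> {} \<notin> C \<and> {x0} \<in> C \<and> dim {x0} = (0::nat) \<and>
       (\<forall>e\<in>C. \<exists>\<Phi>. continuous_map (disk_top (dim e)) X \<Phi> \<and>
            homeomorphic_map (subtopology (disk_top (dim e)) (open_disk_pts (dim e)))
                             (subtopology X e) \<Phi> \<and>
            (\<exists>F. F \<subseteq> C \<and> finite F \<and> (\<forall>e'\<in>F. dim e' < dim e) \<and>
                 \<Phi> ` sphere_pts (dim e) \<subseteq> \<Union>F)) \<and>
       (\<forall>A. A \<subseteq> topspace X \<longrightarrow>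
          (closedin X A \<longleftrightarrow> (\<forall>e\<in>C. closedin (subtopology X (X closure_of e)) (A \<inter> X closure_of e)))))"

text \<open>Maps are represented extensionally (value \<open>undefined\<close> outside the domain).\<close>

definition based_maps :: "'a topology \<Rightarrow> 'a \<Rightarrow> 'b topology \<Rightarrow> 'b \<Rightarrow> ('a \<Rightarrow> 'b) set" where
  "based_maps X x0 Y y0 = {f. continuous_map X Y f \<and> f x0 = y0 \<and> f \<in> extensional (topspace X)}"

definition unbased_maps :: "'a topology \<Rightarrow> 'b topology \<Rightarrow> ('a \<Rightarrow> 'b) set" where
  "unbased_maps U V = {f. continuous_map U V f \<and> f \<in> extensional (topspace U)}"

definition compact_open_top :: "'a topology \<Rightarrow> 'b topology \<Rightarrow> ('a \<Rightarrow> 'b) set \<Rightarrow> ('a \<Rightarrow> 'b) topology" where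
  "compact_open_top X Y M = topology_generated_by
     {{f \<in> M. f ` K \<subseteq> U} | K U. compactin X K \<and> openin Y U}"

definition map_space :: "'a topology \<Rightarrow> 'a \<Rightarrow> 'b topology \<Rightarrow> 'b \<Rightarrow> ('a \<Rightarrow> 'b) topology" where
  "map_space X x0 Y y0 = compact_open_top X Y (based_maps X x0 Y y0)"

definition transform :: "'a topology \<Rightarrow> 'a \<Rightarrow> 'b topology \<Rightarrow> 'b \<Rightarrow>
     'c topology \<Rightarrow> 'c \<Rightarrow> 'd topology \<Rightarrow> 'd \<Rightarrow> (('a \<Rightarrow> 'b) \<Rightarrow> ('c \<Rightarrow> 'd)) \<Rightarrow> bool" where
  "transform X x0 Y y0 X' x0' Y' y0' g \<longleftrightarrow>
     continuous_map (map_space X x0 Y y0) (map_space X' x0' Y' y0') g"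

definition primitive_transform :: "'a topology \<Rightarrow> 'a \<Rightarrow> 'b topology \<Rightarrow> 'b \<Rightarrow>
     'c topology \<Rightarrow> 'c \<Rightarrow> 'd topology \<Rightarrow> 'd \<Rightarrow> (('a \<Rightarrow> 'b) \<Rightarrow> ('c \<Rightarrow> 'd)) \<Rightarrow> bool" where
  "primitive_transform X x0 Y y0 X' x0' Y' y0' g \<longleftrightarrow>
     transform X x0 Y y0 X' x0' Y' y0' g \<and>
     (\<forall>p\<in>topspace X'. \<exists>k\<in>topspace X. \<exists>h. continuous_map Y Y' h \<and>
         (\<forall>d\<in>based_maps X x0 Y y0. g d p = h (d k)))"

definition free_ab :: "'w set \<Rightarrow> ('w \<Rightarrow> int) set" where
  "free_ab W = {V. finite {w. V w \<noteq> 0} \<and> {w. V w \<noteq> 0} \<subseteq> W}"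

definition gen :: "'w \<Rightarrow> ('w \<Rightarrow> int)" where
  "gen w = (\<lambda>v. if v = w then 1 else 0)"

definition lin :: "('w \<Rightarrow> 'v) \<Rightarrow> ('w \<Rightarrow> int) \<Rightarrow> ('v \<Rightarrow> int)" where
  "lin f V = (\<lambda>v. \<Sum>w\<in>{w. V w \<noteq> 0 \<and> f w = v}. V w)"

definition fin_pointed :: "nat \<Rightarrow> 'a set \<Rightarrow> 'a \<Rightarrow> 'a set set" where
  "fin_pointed n Z z0 = {R. finite R \<and> R \<subseteq> Z \<and> z0 \<in> R \<and> card R \<le> n + 1}"

text \<open>\<open>\<langle>Y^Z\<rangle>^{(s)}\<close> inside \<open>\<langle>M\<rangle>\<close>, where Z is the point set with basepoint z0;
  \<open>s \<ge> 1\<close> is assumed where used (so that \<open>s - 1\<close> is the honest predecessor).\<close>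
definition filt :: "nat \<Rightarrow> 'a set \<Rightarrow> 'a \<Rightarrow> ('a \<Rightarrow> 'b) set \<Rightarrow> (('a \<Rightarrow> 'b) \<Rightarrow> int) set" where
  "filt s Z z0 M = {V \<in> free_ab M. \<forall>R\<in>fin_pointed (s - 1) Z z0. lin (\<lambda>d. restrict d R) V = (\<lambda>_. 0)}"

definition simplex_pts :: "nat set \<Rightarrow> (nat \<Rightarrow> real) set" where
  "simplex_pts E = {t \<in> PiE E (\<lambda>_. UNIV). (\<forall>i\<in>E. 0 \<le> t i) \<and> sum t E = 1}"

definition simplex_top :: "nat set \<Rightarrow> (nat \<Rightarrow> real) topology" where
  "simplex_top E = subtopology (product_topology (\<lambda>_. euclideanreal) E) (simplex_pts E)"

definition face_pts :: "nat set \<Rightarrow> nat set \<Rightarrow> (nat \<Rightarrow> real) set" where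
  "face_pts E F = {t \<in> simplex_pts E. \<forall>i\<in>E - F. t i = 0}"

definition layout :: "nat set \<Rightarrow> nat set set \<Rightarrow> bool" where
  "layout E A \<longleftrightarrow> (\<forall>F\<in>A. F \<noteq> {} \<and> F \<subseteq> E) \<and> pairwise disjnt A"

definition glue :: "nat set \<Rightarrow> nat set set \<Rightarrow> (nat set \<Rightarrow> (nat \<Rightarrow> real) \<Rightarrow> 'v) \<Rightarrow> (nat \<Rightarrow> real) \<Rightarrow> 'v" where
  "glue E A c = (\<lambda>t. if \<exists>F\<in>A. t \<in> face_pts E F
                     then c (SOME F. F \<in> A \<and> t \<in> face_pts E F) t else undefined)"

definition glue_sum :: "nat set \<Rightarrow> nat set set \<Rightarrow> (nat set \<Rightarrow> ((nat \<Rightarrow> real) \<Rightarrow> 'v) \<Rightarrow> int)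
     \<Rightarrow> (((nat \<Rightarrow> real) \<Rightarrow> 'v) \<Rightarrow> int)" where
  "glue_sum E A T = (\<lambda>v. \<Sum>c\<in>PiE A (\<lambda>F. {w. T F w \<noteq> 0}). (\<Prod>F\<in>A. T F (c F)) * gen (glue E A c) v)"

definition fissile :: "nat set \<Rightarrow> (((nat \<Rightarrow> real) \<Rightarrow> 'v) \<Rightarrow> int) \<Rightarrow> bool" where
  "fissile E S \<longleftrightarrow> (\<forall>A. layout E A \<longrightarrow>
      lin (\<lambda>w. restrict w (\<Union>F\<in>A. face_pts E F)) S =
      glue_sum E A (\<lambda>F. lin (\<lambda>w. restrict w (face_pts E F)) S))"

text \<open>Points of \<open>U \<wr> X = (U \<times> X)/(U \<times> {x0})\<close> for nonempty U: the collapsed basepoint is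
  \<open>None\<close>, the other points are \<open>Some (u, x)\<close> with \<open>x \<noteq> x0\<close>.\<close>
definition halfsmash_pts :: "'u set \<Rightarrow> 'a set \<Rightarrow> 'a \<Rightarrow> ('u \<times> 'a) option set" where
  "halfsmash_pts U X x0 = insert None (Some ` (U \<times> (X - {x0})))"

definition sharp :: "'b \<Rightarrow> ('u \<Rightarrow> 'a \<Rightarrow> 'b) \<Rightarrow> ('u \<times> 'a) option \<Rightarrow> 'b" where
  "sharp y0 w = (\<lambda>p. case p of None \<Rightarrow> y0 | Some (u, x) \<Rightarrow> w u x)"

definition filt_X :: "nat \<Rightarrow> nat set \<Rightarrow> 'a topology \<Rightarrow> 'a \<Rightarrow> 'b topology \<Rightarrow> 'b
     \<Rightarrow> (((nat \<Rightarrow> real) \<Rightarrow> ('a \<Rightarrow> 'b)) \<Rightarrow> int) set" where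
  "filt_X s E X x0 Y y0 =
     {T \<in> free_ab (unbased_maps (simplex_top E) (map_space X x0 Y y0)).
        lin (sharp y0) T \<in> filt s (halfsmash_pts (simplex_pts E) (topspace X) x0) None
                               (sharp y0 ` unbased_maps (simplex_top E) (map_space X x0 Y y0))}"

definition strongly_similar :: "nat \<Rightarrow> 'a topology \<Rightarrow> 'a \<Rightarrow> 'b topology \<Rightarrow> 'b
     \<Rightarrow> ('a \<Rightarrow> 'b) \<Rightarrow> ('a \<Rightarrow> 'b) \<Rightarrow> bool" where
  "strongly_similar r X x0 Y y0 a b \<longleftrightarrow>
     (\<forall>E::nat set. finite E \<and> E \<noteq> {} \<longrightarrow>
        (\<exists>S. S \<in> free_ab (unbased_maps (simplex_top E)
                   (subtopology (map_space X x0 Y y0)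
                      (path_component_of_set (map_space X x0 Y y0) a))) \<and>
             fissile E S \<and>
             (\<lambda>w. gen (restrict (\<lambda>_. b) (simplex_pts E)) w - S w) \<in> filt_X (r + 1) E X x0 Y y0))"

end

theory Submission
  imports Defs
begin

text \<open>
  A primitive transform acts pointwise, \<open>g(d)(p) = h\<^sup>p(d(k(p)))\<close>, so applying it to every
  simplex of a fissile witness \<open>S\<close> for \<open>a \<approx> b\<close> yields a witness for \<open>g(a) \<approx> g(b)\<close>.
  Postcomposition commutes with restriction to faces and with gluing, and gluing is
  multilinear, so fissility survives; continuity of \<open>g\<close> keeps the simplices in the path
  component of \<open>g(a)\<close>. For the filtration, the values of \<open>g \<circ> w\<close> on a finite set \<open>R\<close> of points
  \<open>(u, p)\<close> of \<open>\<Delta>E \<wr> X'\<close> depend only on the values of \<open>w\<close> on the image of \<open>R\<close> under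
  \<open>(u, p) \<mapsto> (u, k(p))\<close>, which has at most as many points; hence a chain that vanishes on all
  small pointed subsets of \<open>\<Delta>E \<wr> X\<close> is sent to one that vanishes on all small pointed subsets
  of \<open>\<Delta>E \<wr> X'\<close>.
\<close>

definition supp :: "('w \<Rightarrow> int) \<Rightarrow> 'w set" where
  "supp V = {w. V w \<noteq> 0}"

lemma free_ab_iff: "V \<in> free_ab W \<longleftrightarrow> finite (supp V) \<and> supp V \<subseteq> W"
  by (simp add: free_ab_def supp_def)

lemma supp_gen: "supp (gen w) = {w}"
  by (auto simp: supp_def gen_def)

lemma lin_eq_sum_superset:
  assumes "finite B" "supp V \<subseteq> B"
  shows "lin f V v = (\<Sum>w\<in>{w\<in>B. f w = v}. V w)"
  unfolding lin_def using assms
  by (intro sum.mono_neutral_left) (auto simp: supp_def)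

lemma supp_lin: "supp (lin f V) \<subseteq> f ` supp V"
proof
  fix v assume "v \<in> supp (lin f V)"
  then have "{w. V w \<noteq> 0 \<and> f w = v} \<noteq> {}"
    unfolding supp_def lin_def by force
  then show "v \<in> f ` supp V"
    unfolding supp_def by auto
qed

lemma finite_supp_lin: "finite (supp V) \<Longrightarrow> finite (supp (lin f V))"
  by (meson finite_imageI finite_subset supp_lin)

lemma free_ab_lin:
  assumes "V \<in> free_ab W" "f ` W \<subseteq> W'"
  shows "lin f V \<in> free_ab W'"
  using assms supp_lin[of f V] finite_supp_lin[of V f] unfolding free_ab_iff by blast

lemma lin_cong: "(\<And>w. V w \<noteq> 0 \<Longrightarrow> f w = f' w) \<Longrightarrow> lin f V = lin f' V"
  unfolding lin_def by (intro ext sum.cong) auto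

lemma lin_zero: "lin f (\<lambda>_. 0) = (\<lambda>_. 0)"
  unfolding lin_def by simp

lemma lin_gen: "lin f (gen w) = gen (f w)"
  unfolding lin_def gen_def by (auto intro!: ext)

lemma lin_lin:
  assumes "finite (supp V)"
  shows "lin f (lin g V) = lin (f \<circ> g) V"
proof
  fix v
  let ?B = "supp V"
  have "lin f (lin g V) v = (\<Sum>u\<in>{u\<in>g ` ?B. f u = v}. lin g V u)"
    using assms supp_lin[of g V] by (intro lin_eq_sum_superset) auto
  also have "\<dots> = (\<Sum>u\<in>{u\<in>g ` ?B. f u = v}. \<Sum>w\<in>{w\<in>{w\<in>?B. f (g w) = v}. g w = u}. V w)"
    using assms by (intro sum.cong refl) (auto simp: lin_eq_sum_superset intro!: sum.cong)
  also have "\<dots> = (\<Sum>w\<in>{w\<in>?B. f (g w) = v}. V w)"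
    using assms by (intro sum.group) auto
  also have "\<dots> = lin (f \<circ> g) V v"
    using assms by (simp add: lin_eq_sum_superset)
  finally show "lin f (lin g V) v = lin (f \<circ> g) V v" .
qed

lemma lin_diff:
  assumes "finite (supp V)" "finite (supp W)"
  shows "lin f (\<lambda>w. V w - W w) = (\<lambda>v. lin f V v - lin f W v)"
proof
  fix v
  let ?B = "supp V \<union> supp W"
  have "supp (\<lambda>w. V w - W w) \<subseteq> ?B"
    by (auto simp: supp_def)
  then show "lin f (\<lambda>w. V w - W w) v = lin f V v - lin f W v"
    using assms by (simp add: lin_eq_sum_superset[of ?B] sum_subtractf)
qed

lemma lin_sum_gen:
  assumes "finite C"
  shows "lin f (\<lambda>v. \<Sum>c\<in>C. \<alpha> c * gen (x c) v) = (\<lambda>v. \<Sum>c\<in>C. \<alpha> c * gen (f (x c)) v)"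
proof
  fix v
  have supp_sum: "supp (\<lambda>v. \<Sum>c\<in>C. \<alpha> c * gen (x c) v) \<subseteq> x ` C"
  proof
    fix w assume "w \<in> supp (\<lambda>v. \<Sum>c\<in>C. \<alpha> c * gen (x c) v)"
    then obtain c where "c \<in> C" "\<alpha> c * gen (x c) w \<noteq> 0"
      unfolding supp_def by (meson mem_Collect_eq sum.neutral)
    then show "w \<in> x ` C"
      by (auto simp: gen_def split: if_splits)
  qed
  have "lin f (\<lambda>v. \<Sum>c\<in>C. \<alpha> c * gen (x c) v) v
      = (\<Sum>w\<in>{w\<in>x ` C. f w = v}. \<Sum>c\<in>C. \<alpha> c * gen (x c) w)"
    using assms supp_sum by (intro lin_eq_sum_superset) auto
  also have "\<dots> = (\<Sum>c\<in>C. \<Sum>w\<in>{w\<in>x ` C. f w = v}. \<alpha> c * gen (x c) w)"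
    by (rule sum.swap)
  also have "\<dots> = (\<Sum>c\<in>C. \<alpha> c * gen (f (x c)) v)"
    using assms by (intro sum.cong refl) (auto simp: gen_def if_distrib sum.delta' cong: if_cong)
  finally show "lin f (\<lambda>v. \<Sum>c\<in>C. \<alpha> c * gen (x c) v) v = (\<Sum>c\<in>C. \<alpha> c * gen (f (x c)) v)" .
qed

lemma prod_lin_eq_sum_PiE:
  assumes "finite A" "\<And>F. F \<in> A \<Longrightarrow> finite (supp (T F))" "c' \<in> extensional A"
  shows "(\<Prod>F\<in>A. lin (f F) (T F) (c' F))
       = (\<Sum>c\<in>{c \<in> PiE A (\<lambda>F. supp (T F)). restrict (\<lambda>F. f F (c F)) A = c'}. \<Prod>F\<in>A. T F (c F))"
proof -
  define fib where "fib F = {w \<in> supp (T F). f F w = c' F}" for F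
  have "(\<Prod>F\<in>A. lin (f F) (T F) (c' F)) = (\<Prod>F\<in>A. \<Sum>w\<in>fib F. T F w)"
    by (simp add: lin_def supp_def fib_def)
  also have "\<dots> = (\<Sum>c\<in>PiE A fib. \<Prod>F\<in>A. T F (c F))"
    using assms by (intro prod_sum_PiE) (auto simp: fib_def)
  also have "PiE A fib = {c \<in> PiE A (\<lambda>F. supp (T F)). restrict (\<lambda>F. f F (c F)) A = c'}"
    using assms(3) by (fastforce simp: PiE_def Pi_def fib_def extensional_def)
  finally show ?thesis .
qed

text \<open>Multilinearity of sums over choice functions: pushing each factor \<open>T F\<close> forward along
  \<open>f F\<close> is the same as applying \<open>f F\<close> to the \<open>F\<close>-th coordinate of every choice function.\<close>

lemma sum_PiE_lin:
  fixes T :: "'i \<Rightarrow> 'w \<Rightarrow> int" and f :: "'i \<Rightarrow> 'w \<Rightarrow> 'v" and h :: "('i \<Rightarrow> 'v) \<Rightarrow> int"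
  assumes A: "finite A" and fin: "\<And>F. F \<in> A \<Longrightarrow> finite (supp (T F))"
  shows "(\<Sum>c\<in>PiE A (\<lambda>F. supp (T F)). (\<Prod>F\<in>A. T F (c F)) * h (restrict (\<lambda>F. f F (c F)) A))
       = (\<Sum>c'\<in>PiE A (\<lambda>F. supp (lin (f F) (T F))). (\<Prod>F\<in>A. lin (f F) (T F) (c' F)) * h c')"
proof -
  let ?P = "PiE A (\<lambda>F. supp (T F))" and ?P' = "PiE A (\<lambda>F. f F ` supp (T F))"
  let ?\<pi> = "\<lambda>c. restrict (\<lambda>F. f F (c F)) A"
  have fin_P: "finite ?P" "finite ?P'"
    using A fin by (simp_all add: finite_PiE)
  have "(\<Sum>c'\<in>PiE A (\<lambda>F. supp (lin (f F) (T F))). (\<Prod>F\<in>A. lin (f F) (T F) (c' F)) * h c')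
      = (\<Sum>c'\<in>?P'. (\<Prod>F\<in>A. lin (f F) (T F) (c' F)) * h c')"
  proof (rule sum.mono_neutral_left[OF fin_P(2)])
    show "PiE A (\<lambda>F. supp (lin (f F) (T F))) \<subseteq> ?P'"
      by (intro PiE_mono supp_lin)
    show "\<forall>c'\<in>?P' - PiE A (\<lambda>F. supp (lin (f F) (T F))). (\<Prod>F\<in>A. lin (f F) (T F) (c' F)) * h c' = 0"
      using A by (auto simp: PiE_iff supp_def)
  qed
  also have "\<dots> = (\<Sum>c'\<in>?P'. \<Sum>c\<in>{c \<in> ?P. ?\<pi> c = c'}. (\<Prod>F\<in>A. T F (c F)) * h (?\<pi> c))"
    using A fin by (intro sum.cong refl) (simp add: PiE_iff prod_lin_eq_sum_PiE sum_distrib_right)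
  also have "\<dots> = (\<Sum>c\<in>?P. (\<Prod>F\<in>A. T F (c F)) * h (?\<pi> c))"
    using fin_P by (intro sum.group) auto
  finally show ?thesis ..
qed

lemma lin_glue_sum:
  assumes "finite A" "\<And>F. F \<in> A \<Longrightarrow> finite (supp (T F))"
    and "\<And>c. f (glue E A c) = glue E A (\<lambda>F\<in>A. f' F (c F))"
  shows "lin f (glue_sum E A T) = glue_sum E A (\<lambda>F. lin (f' F) (T F))"
proof -
  have "lin f (glue_sum E A T)
      = (\<lambda>v. \<Sum>c\<in>PiE A (\<lambda>F. supp (T F)). (\<Prod>F\<in>A. T F (c F)) * gen (f (glue E A c)) v)"
    unfolding glue_sum_def supp_def[symmetric] using assms
    by (intro lin_sum_gen) (simp add: finite_PiE)
  also have "\<dots> = glue_sum E A (\<lambda>F. lin (f' F) (T F))"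
    unfolding assms(3) glue_sum_def supp_def[symmetric]
    by (rule ext, rule sum_PiE_lin[OF assms(1,2)])
  finally show ?thesis .
qed

definition postcompose :: "('b \<Rightarrow> 'c) \<Rightarrow> 'u set \<Rightarrow> ('u \<Rightarrow> 'b) \<Rightarrow> 'u \<Rightarrow> 'c" where
  "postcompose g U w = restrict (\<lambda>t. g (w t)) U"

lemma restrict_postcompose:
  "V \<subseteq> U \<Longrightarrow> restrict (postcompose g U w) V = postcompose g V (restrict w V)"
  by (auto simp: postcompose_def fun_eq_iff)

lemma postcompose_const: "postcompose g U (restrict (\<lambda>_. b) U) = restrict (\<lambda>_. g b) U"
  by (auto simp: postcompose_def)

lemma postcompose_glue:
  "postcompose g (\<Union>F\<in>A. face_pts E F) (glue E A c)
     = glue E A (\<lambda>F\<in>A. postcompose g (face_pts E F) (c F))"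
proof
  fix t
  show "postcompose g (\<Union>F\<in>A. face_pts E F) (glue E A c) t
      = glue E A (\<lambda>F\<in>A. postcompose g (face_pts E F) (c F)) t"
  proof (cases "\<exists>F\<in>A. t \<in> face_pts E F")
    case True
    define F0 where "F0 = (SOME F. F \<in> A \<and> t \<in> face_pts E F)"
    have "F0 \<in> A \<and> t \<in> face_pts E F0"
      unfolding F0_def using True by (rule someI_ex[OF bexE]) blast
    with True show ?thesis
      by (auto simp: glue_def postcompose_def F0_def[symmetric])
  next
    case False
    then show ?thesis
      by (auto simp: glue_def postcompose_def)
  qed
qed

lemma postcompose_mem_unbased_maps:
  assumes "w \<in> unbased_maps U N" "continuous_map N N' g"
  shows "postcompose g (topspace U) w \<in> unbased_maps U N'"
proof -
  have "continuous_map U N' (g \<circ> w)"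
    using assms continuous_map_compose by (auto simp: unbased_maps_def)
  then have "continuous_map U N' (postcompose g (topspace U) w)"
    by (rule continuous_map_eq) (simp add: postcompose_def)
  then show ?thesis
    by (simp add: unbased_maps_def postcompose_def)
qed

lemma continuous_map_path_component_of_set:
  assumes "continuous_map M M' g"
  shows "continuous_map (subtopology M (path_component_of_set M a))
           (subtopology M' (path_component_of_set M' (g a))) g"
  using assms path_component_of_continuous_image[OF assms]
  by (auto simp: continuous_map_in_subtopology continuous_map_from_subtopology)

lemma topspace_map_space: "topspace (map_space X x0 Y y0) = based_maps X x0 Y y0"
proof -
  have "based_maps X x0 Y y0 \<in> {{f \<in> based_maps X x0 Y y0. f ` K \<subseteq> U} | K U. compactin X K \<and> openin Y U}"
    by (rule CollectI, rule exI[of _ "{}"], rule exI[of _ "{}"]) auto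
  then show ?thesis
    unfolding map_space_def compact_open_top_def topology_generated_by_topspace by blast
qed

lemma topspace_simplex_top: "topspace (simplex_top E) = simplex_pts E"
  unfolding simplex_top_def simplex_pts_def by auto

lemma fissile_lin_postcompose:
  assumes "finite E" "fissile E S" "finite (supp S)"
  shows "fissile E (lin (postcompose g (simplex_pts E)) S)"
  unfolding fissile_def
proof (intro allI impI)
  fix A assume layout: "layout E A"
  then have "finite A"
    using assms(1) by (metis finite_Pow_iff layout_def rev_finite_subset subsetI PowI)
  have faces: "face_pts E F \<subseteq> simplex_pts E" for F
    by (auto simp: face_pts_def)
  have restrict_lin_postcompose:
    "lin (\<lambda>w. restrict w V) (lin (postcompose g (simplex_pts E)) S)
       = lin (postcompose g V) (lin (\<lambda>w. restrict w V) S)" if "V \<subseteq> simplex_pts E" for V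
    using that assms(3) by (simp add: lin_lin comp_def restrict_postcompose)
  let ?U = "\<Union>F\<in>A. face_pts E F"
  have "lin (\<lambda>w. restrict w ?U) (lin (postcompose g (simplex_pts E)) S)
      = lin (postcompose g ?U) (lin (\<lambda>w. restrict w ?U) S)"
    using faces by (intro restrict_lin_postcompose) blast
  also have "\<dots> = lin (postcompose g ?U) (glue_sum E A (\<lambda>F. lin (\<lambda>w. restrict w (face_pts E F)) S))"
    using assms(2) layout by (simp add: fissile_def)
  also have "\<dots> = glue_sum E A (\<lambda>F. lin (postcompose g (face_pts E F)) (lin (\<lambda>w. restrict w (face_pts E F)) S))"
    using \<open>finite A\<close> assms(3) by (intro lin_glue_sum finite_supp_lin postcompose_glue)
  also have "\<dots> = glue_sum E A (\<lambda>F. lin (\<lambda>w. restrict w (face_pts E F)) (lin (postcompose g (simplex_pts E)) S))"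
    using faces by (simp add: restrict_lin_postcompose)
  finally show "lin (\<lambda>w. restrict w ?U) (lin (postcompose g (simplex_pts E)) S)
      = glue_sum E A (\<lambda>F. lin (\<lambda>w. restrict w (face_pts E F)) (lin (postcompose g (simplex_pts E)) S))" .
qed

lemma lin_mem_filt_if_restrictions_factor:
  assumes "finite (supp T)" "supp T \<subseteq> M"
    and "lin \<phi> T \<in> filt s Z z0 N" and "\<psi> ` M \<subseteq> M'"
    and "\<And>R. R \<in> fin_pointed (s - 1) Z' z0' \<Longrightarrow>
           \<exists>R0\<in>fin_pointed (s - 1) Z z0. \<exists>\<Psi>. \<forall>w\<in>M. restrict (\<psi> w) R = \<Psi> (restrict (\<phi> w) R0)"
  shows "lin \<psi> T \<in> filt s Z' z0' M'"
  unfolding filt_def mem_Collect_eq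
proof (intro conjI ballI)
  show "lin \<psi> T \<in> free_ab M'"
    using assms(1,2,4) by (intro free_ab_lin[of _ M]) (auto simp: free_ab_iff)
next
  fix R assume "R \<in> fin_pointed (s - 1) Z' z0'"
  then obtain R0 \<Psi> where R0: "R0 \<in> fin_pointed (s - 1) Z z0"
    and factor: "\<And>w. w \<in> M \<Longrightarrow> restrict (\<psi> w) R = \<Psi> (restrict (\<phi> w) R0)"
    using assms(5) by blast
  have "lin (\<lambda>d. restrict d R) (lin \<psi> T) = lin ((\<lambda>d. restrict d R) \<circ> \<psi>) T"
    using assms(1) by (rule lin_lin)
  also have "\<dots> = lin (\<Psi> \<circ> ((\<lambda>d. restrict d R0) \<circ> \<phi>)) T"
    using assms(2) factor by (intro lin_cong) (auto simp: supp_def)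
  also have "\<dots> = lin \<Psi> (lin (\<lambda>d. restrict d R0) (lin \<phi> T))"
    using assms(1) finite_supp_lin by (simp add: lin_lin)
  also have "\<dots> = (\<lambda>_. 0)"
    using assms(3) R0 by (simp add: filt_def lin_zero)
  finally show "lin (\<lambda>d. restrict d R) (lin \<psi> T) = (\<lambda>_. 0)" .
qed

text \<open>The map \<open>U \<wr> X' \<rightarrow> U \<wr> X\<close> induced by \<open>k : X' \<rightarrow> X\<close>; it is well defined even though \<open>k\<close>
  need not be based, because points over \<open>x0\<close> are collapsed.\<close>

definition halfsmash_map :: "('c \<Rightarrow> 'a) \<Rightarrow> 'a \<Rightarrow> ('u \<times> 'c) option \<Rightarrow> ('u \<times> 'a) option" where
  "halfsmash_map k x0 q =
     (case q of None \<Rightarrow> None | Some (u, p) \<Rightarrow> if k p = x0 then None else Some (u, k p))"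

lemma image_halfsmash_map_fin_pointed:
  assumes "k ` X' \<subseteq> X" "R \<in> fin_pointed n (halfsmash_pts U X' x0') None"
  shows "halfsmash_map k x0 ` R \<in> fin_pointed n (halfsmash_pts U X x0) None"
proof -
  have "halfsmash_map k x0 q \<in> halfsmash_pts U X x0" if "q \<in> halfsmash_pts U X' x0'" for q
    using that assms(1) by (auto simp: halfsmash_pts_def halfsmash_map_def split: if_splits)
  moreover have "None = halfsmash_map k x0 None"
    by (simp add: halfsmash_map_def)
  ultimately show ?thesis
    using assms(2) card_image_le[of R "halfsmash_map k x0"] by (force simp: fin_pointed_def)
qed

lemma sharp_simps [simp]:
  "sharp y0 w None = y0"
  "sharp y0 w (Some (u, x)) = w u x"
  by (simp_all add: sharp_def)

lemma restrict_sharp_postcompose_factors: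
  assumes "\<And>p d. p \<in> topspace X' \<Longrightarrow> d \<in> based_maps X x0 Y y0 \<Longrightarrow> g d p = h p (d (k p))"
    and "R \<subseteq> halfsmash_pts (topspace U) (topspace X') x0'"
  shows "\<exists>\<Psi>. \<forall>w\<in>unbased_maps U (map_space X x0 Y y0).
           restrict (sharp y0' (postcompose g (topspace U) w)) R
             = \<Psi> (restrict (sharp y0 w) (halfsmash_map k x0 ` R))"
proof (intro exI ballI ext)
  fix w q assume w: "w \<in> unbased_maps U (map_space X x0 Y y0)"
  let ?\<Psi> = "\<lambda>v. restrict (\<lambda>q. case q of None \<Rightarrow> y0' | Some (u, p) \<Rightarrow> h p (v (halfsmash_map k x0 q))) R"
  have based: "w u \<in> based_maps X x0 Y y0" if "u \<in> topspace U" for u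
    using w that continuous_map_image_subset_topspace
    by (fastforce simp: unbased_maps_def topspace_map_space)
  show "restrict (sharp y0' (postcompose g (topspace U) w)) R q
      = ?\<Psi> (restrict (sharp y0 w) (halfsmash_map k x0 ` R)) q"
  proof (cases "q \<in> R")
    case True
    with assms(2) consider "q = None"
      | u p where "q = Some (u, p)" "u \<in> topspace U" "p \<in> topspace X'"
      by (auto simp: halfsmash_pts_def)
    then show ?thesis
    proof cases
      case 2
      with based have "w u x0 = y0" and g_w: "g (w u) p = h p (w u (k p))"
        using assms(1) by (auto simp: based_maps_def)
      with 2 have "sharp y0 w (halfsmash_map k x0 q) = w u (k p)"
        by (simp add: halfsmash_map_def)
      moreover have "halfsmash_map k x0 q \<in> halfsmash_map k x0 ` R"
        using True by (rule imageI)
      ultimately show ?thesis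
        using 2 True g_w by (simp add: postcompose_def)
    qed (use True in simp)
  qed simp
qed

lemma filt_X_lin_postcompose:
  assumes "primitive_transform X x0 Y y0 X' x0' Y' y0' g" "T \<in> filt_X s E X x0 Y y0"
  shows "lin (postcompose g (simplex_pts E)) T \<in> filt_X s E X' x0' Y' y0'"
proof -
  let ?M = "unbased_maps (simplex_top E) (map_space X x0 Y y0)"
  let ?M' = "unbased_maps (simplex_top E) (map_space X' x0' Y' y0')"
  let ?\<Phi> = "postcompose g (simplex_pts E)"
  obtain k h where k: "\<And>p. p \<in> topspace X' \<Longrightarrow> k p \<in> topspace X"
    and h: "\<And>p d. p \<in> topspace X' \<Longrightarrow> d \<in> based_maps X x0 Y y0 \<Longrightarrow> g d p = h p (d (k p))"
    using assms(1) unfolding primitive_transform_def by metis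
  have \<Phi>_M: "?\<Phi> ` ?M \<subseteq> ?M'"
    using assms(1) postcompose_mem_unbased_maps[of _ "simplex_top E"]
    by (auto simp: primitive_transform_def transform_def topspace_simplex_top)
  have T: "finite (supp T)" "supp T \<subseteq> ?M"
    "lin (sharp y0) T \<in> filt s (halfsmash_pts (simplex_pts E) (topspace X) x0) None (sharp y0 ` ?M)"
    using assms(2) by (auto simp: filt_X_def free_ab_iff)
  have "lin (sharp y0' \<circ> ?\<Phi>) T
      \<in> filt s (halfsmash_pts (simplex_pts E) (topspace X') x0') None (sharp y0' ` ?M')"
  proof (rule lin_mem_filt_if_restrictions_factor[OF T])
    show "(sharp y0' \<circ> ?\<Phi>) ` ?M \<subseteq> sharp y0' ` ?M'"
      using \<Phi>_M by auto
  next
    fix R assume R: "R \<in> fin_pointed (s - 1) (halfsmash_pts (simplex_pts E) (topspace X') x0') None"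
    show "\<exists>R0\<in>fin_pointed (s - 1) (halfsmash_pts (simplex_pts E) (topspace X) x0) None.
            \<exists>\<Psi>. \<forall>w\<in>?M. restrict ((sharp y0' \<circ> ?\<Phi>) w) R = \<Psi> (restrict (sharp y0 w) R0)"
    proof
      show "halfsmash_map k x0 ` R \<in> fin_pointed (s - 1) (halfsmash_pts (simplex_pts E) (topspace X) x0) None"
        using k R by (intro image_halfsmash_map_fin_pointed) auto
      have "\<exists>\<Psi>. \<forall>w\<in>?M. restrict (sharp y0' (?\<Phi> w)) R = \<Psi> (restrict (sharp y0 w) (halfsmash_map k x0 ` R))"
        using R
        by (intro restrict_sharp_postcompose_factors[where U="simplex_top E" and X'=X' and x0'=x0'
              and h=h, unfolded topspace_simplex_top] h)
          (auto simp: fin_pointed_def)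
      then show "\<exists>\<Psi>. \<forall>w\<in>?M. restrict ((sharp y0' \<circ> ?\<Phi>) w) R = \<Psi> (restrict (sharp y0 w) (halfsmash_map k x0 ` R))"
        by simp
    qed
  qed
  moreover have "lin ?\<Phi> T \<in> free_ab ?M'"
    using assms(2) \<Phi>_M by (intro free_ab_lin) (auto simp: filt_X_def)
  ultimately show ?thesis
    using T(1) by (simp add: filt_X_def lin_lin)
qed

theorem lemma4p3:
  fixes X :: "'a topology" and Y :: "'b topology" and X' :: "'c topology" and Y' :: "'d topology"
    and g :: "('a \<Rightarrow> 'b) \<Rightarrow> ('c \<Rightarrow> 'd)" and r :: nat
  assumes "cellular_space X x0" and "cellular_space Y y0"
    and "cellular_space X' x0'" and "cellular_space Y' y0'"
    and "compact_space X" and "compact_space X'"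
    and "primitive_transform X x0 Y y0 X' x0' Y' y0' g"
    and "a \<in> based_maps X x0 Y y0" and "b \<in> based_maps X x0 Y y0"
    and "strongly_similar r X x0 Y y0 a b"
  shows "strongly_similar r X' x0' Y' y0' (g a) (g b)"
  unfolding strongly_similar_def
proof (intro allI impI)
  fix E :: "nat set" assume E: "finite E \<and> E \<noteq> {}"
  let ?MS = "map_space X x0 Y y0" and ?MS' = "map_space X' x0' Y' y0'"
  let ?\<Phi> = "postcompose g (simplex_pts E)" and ?b = "restrict (\<lambda>_. b) (simplex_pts E)"
  obtain S where S: "S \<in> free_ab (unbased_maps (simplex_top E) (subtopology ?MS (path_component_of_set ?MS a)))"
    "fissile E S" "(\<lambda>w. gen ?b w - S w) \<in> filt_X (r + 1) E X x0 Y y0"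
    using assms(10) E unfolding strongly_similar_def by blast
  have "continuous_map ?MS ?MS' g"
    using assms(7) by (simp add: primitive_transform_def transform_def)
  then have "lin ?\<Phi> S \<in> free_ab (unbased_maps (simplex_top E) (subtopology ?MS' (path_component_of_set ?MS' (g a))))"
    using S(1) by (auto intro!: free_ab_lin continuous_map_path_component_of_set
        postcompose_mem_unbased_maps[of _ "simplex_top E", unfolded topspace_simplex_top])
  moreover have "fissile E (lin ?\<Phi> S)"
    using E S by (intro fissile_lin_postcompose) (auto simp: free_ab_iff)
  moreover have "(\<lambda>w. gen (restrict (\<lambda>_. g b) (simplex_pts E)) w - lin ?\<Phi> S w) = lin ?\<Phi> (\<lambda>w. gen ?b w - S w)"
    using S(1) by (simp add: lin_diff supp_gen free_ab_iff lin_gen postcompose_const)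
  moreover have "lin ?\<Phi> (\<lambda>w. gen ?b w - S w) \<in> filt_X (r + 1) E X' x0' Y' y0'"
    using assms(7) S(3) by (rule filt_X_lin_postcompose)
  ultimately show "\<exists>S'. S' \<in> free_ab (unbased_maps (simplex_top E) (subtopology ?MS' (path_component_of_set ?MS' (g a))))
      \<and> fissile E S' \<and> (\<lambda>w. gen (restrict (\<lambda>_. g b) (simplex_pts E)) w - S' w) \<in> filt_X (r + 1) E X' x0' Y' y0'"
    by auto
qed

end
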